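(* Let $R=\bigoplus_{\alpha\in\Gamma}R_{\alpha}$ be an integrally closed graded integral domain. Then $R$ is a graded-Prüfer domain if and only if every nonzero finitely generated homogeneous ideal of $R$ is a $v$-ideal.
   Context: $\Gamma$ is a commutative cancellative monoid (written additively) whose quotient group $\langle\Gamma\rangle$ is torsion-free. A graded integral domain $R=\bigoplus_{\alpha\in\Gamma}R_\alpha$ is an integral domain that is the direct sum of additive subgroups $R_\alpha$ with $R_\alpha R_\beta\subseteq R_{\alpha+\beta}$, with quotient field $K$. An ideal $I$ is homogeneous if $I=\bigoplus_\alpha(I\cap R_\alpha)$. $R$ is a graded-Prüfer domain if every nonzero finitely generated homogeneous ideal of $R$ is invertible. An ideal $I$ is a $v$-ideal if $I=(R:(R:I))$, where $(R:E)=\{x\in K: xE\subseteq R\}$. *)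

theory Defs
  imports Main
begin

definition nsmul :: "nat \<Rightarrow> 'g::ab_group_add \<Rightarrow> 'g" where
  "nsmul n x = ((+) x ^^ n) 0"

definition hom_family :: "'g set \<Rightarrow> ('g \<Rightarrow> 'k::field set) \<Rightarrow> ('g \<Rightarrow> 'k) \<Rightarrow> bool" where
  "hom_family \<Gamma> D f \<longleftrightarrow>
     finite {\<alpha>. f \<alpha> \<noteq> 0} \<and> {\<alpha>. f \<alpha> \<noteq> 0} \<subseteq> \<Gamma> \<and> (\<forall>\<alpha>\<in>\<Gamma>. f \<alpha> \<in> D \<alpha>)"

text \<open>R (a subring of the field 'k) is a graded integral domain
  R = (+)_{alpha in Gamma} R_alpha, where Gamma is a commutative (cancellative)
  submonoid of the abelian group 'g whose generated group {a - b} is torsion-free.\<close>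
definition graded_domain :: "'g::ab_group_add set \<Rightarrow> 'k::field set \<Rightarrow> ('g \<Rightarrow> 'k set) \<Rightarrow> bool" where
  "graded_domain \<Gamma> R Rg \<longleftrightarrow>
     0 \<in> \<Gamma> \<and> (\<forall>a\<in>\<Gamma>. \<forall>b\<in>\<Gamma>. a + b \<in> \<Gamma>) \<and>
     (\<forall>a\<in>\<Gamma>. \<forall>b\<in>\<Gamma>. \<forall>n::nat. n > 0 \<longrightarrow> nsmul n (a - b) = 0 \<longrightarrow> a = b) \<and>
     0 \<in> R \<and> 1 \<in> R \<and> (\<forall>x\<in>R. \<forall>y\<in>R. x + y \<in> R \<and> x * y \<in> R \<and> - x \<in> R) \<and>
     (\<forall>\<alpha>\<in>\<Gamma>. Rg \<alpha> \<subseteq> R \<and> 0 \<in> Rg \<alpha> \<and> (\<forall>x\<in>Rg \<alpha>. \<forall>y\<in>Rg \<alpha>. x - y \<in> Rg \<alpha>)) \<and>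
     (\<forall>\<alpha>\<in>\<Gamma>. \<forall>\<beta>\<in>\<Gamma>. \<forall>x\<in>Rg \<alpha>. \<forall>y\<in>Rg \<beta>. x * y \<in> Rg (\<alpha> + \<beta>)) \<and>
     (\<forall>r\<in>R. \<exists>f. hom_family \<Gamma> Rg f \<and> r = sum f {\<alpha>. f \<alpha> \<noteq> 0}) \<and>
     (\<forall>f. hom_family \<Gamma> Rg f \<and> sum f {\<alpha>. f \<alpha> \<noteq> 0} = 0 \<longrightarrow> (\<forall>\<alpha>. f \<alpha> = 0))"

definition is_quotient_field :: "'k::field set \<Rightarrow> bool" where
  "is_quotient_field R \<longleftrightarrow> (\<forall>x. \<exists>a\<in>R. \<exists>b\<in>R. b \<noteq> 0 \<and> x = a / b)"

definition integrally_closed :: "'k::field set \<Rightarrow> bool" where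
  "integrally_closed R \<longleftrightarrow>
     (\<forall>x. (\<exists>n::nat. \<exists>c. n > 0 \<and> (\<forall>i<n. c i \<in> R) \<and> x ^ n + (\<Sum>i<n. c i * x ^ i) = 0)
          \<longrightarrow> x \<in> R)"

definition is_ideal :: "'k::field set \<Rightarrow> 'k set \<Rightarrow> bool" where
  "is_ideal R I \<longleftrightarrow> I \<subseteq> R \<and> 0 \<in> I \<and> (\<forall>x\<in>I. \<forall>y\<in>I. x + y \<in> I) \<and>
     (\<forall>r\<in>R. \<forall>x\<in>I. r * x \<in> I)"

definition homogeneous_ideal :: "'g set \<Rightarrow> 'k::field set \<Rightarrow> ('g \<Rightarrow> 'k set) \<Rightarrow> 'k set \<Rightarrow> bool" where
  "homogeneous_ideal \<Gamma> R Rg I \<longleftrightarrow> is_ideal R I \<and>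
     (\<forall>x\<in>I. \<exists>f. hom_family \<Gamma> (\<lambda>\<alpha>. Rg \<alpha> \<inter> I) f \<and> x = sum f {\<alpha>. f \<alpha> \<noteq> 0})"

definition ideal_gen :: "'k::field set \<Rightarrow> 'k set \<Rightarrow> 'k set" where
  "ideal_gen R S = {\<Sum>s\<in>T. c s * s | T c. finite T \<and> T \<subseteq> S \<and> (\<forall>s\<in>T. c s \<in> R)}"

definition fin_gen_ideal :: "'k::field set \<Rightarrow> 'k set \<Rightarrow> bool" where
  "fin_gen_ideal R I \<longleftrightarrow> (\<exists>S. finite S \<and> S \<subseteq> R \<and> I = ideal_gen R S)"

definition colon :: "'k::field set \<Rightarrow> 'k set \<Rightarrow> 'k set" where
  "colon R E = {x. \<forall>e\<in>E. x * e \<in> R}"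

definition ideal_product :: "'k::field set \<Rightarrow> 'k set \<Rightarrow> 'k set" where
  "ideal_product A B = {\<Sum>i<n. a i * b i | (n::nat) a b. \<forall>i<n. a i \<in> A \<and> b i \<in> B}"

definition invertible_ideal :: "'k::field set \<Rightarrow> 'k set \<Rightarrow> bool" where
  "invertible_ideal R I \<longleftrightarrow> ideal_product I (colon R I) = R"

definition v_ideal :: "'k::field set \<Rightarrow> 'k set \<Rightarrow> bool" where
  "v_ideal R I \<longleftrightarrow> I = colon R (colon R I)"

definition graded_pruefer :: "'g set \<Rightarrow> 'k::field set \<Rightarrow> ('g \<Rightarrow> 'k set) \<Rightarrow> bool" where
  "graded_pruefer \<Gamma> R Rg \<longleftrightarrow>
     (\<forall>I. homogeneous_ideal \<Gamma> R Rg I \<and> fin_gen_ideal R I \<and> I \<noteq> {0} \<longrightarrow> invertible_ideal R I)"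

end

(* Invertible ideals are v-ideals, which gives one direction. Conversely, let a, b be nonzero
   homogeneous elements. For y in (R : (a^2, b^2)) the element a b y is a root of
   X^2 - (a^2 y)(b^2 y), so integral closedness puts a b into the v-closure of (a^2, b^2), which by
   hypothesis is (a^2, b^2) itself. From a b = r a^2 + s b^2 the element x = r a / b satisfies
   x^2 - x + r s = 0, hence lies in R, and p = 1 - x satisfies p a in b R and (1 - p) b in a R.
   Gluing such pairs by induction over a finite set S of nonzero homogeneous generators of a
   finitely generated homogeneous ideal I gives p_i in R with sum p_i = 1 and p_i S contained in
   i R; the elements p_i / i then lie in (R : I) and sum i (p_i / i) = 1, so I is invertible. *)

theory Submission
  imports Defs
begin

lemma sum_mem_closed:
  assumes "0 \<in> X" "\<And>x y. x \<in> X \<Longrightarrow> y \<in> X \<Longrightarrow> x + y \<in> X" "\<And>i. i \<in> A \<Longrightarrow> f i \<in> X"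
  shows "sum f A \<in> X"
proof (cases "finite A")
  case True
  then show ?thesis using assms(3)
    by (induction A rule: finite_induct) (auto intro: assms(1,2))
next
  case False
  then show ?thesis using assms(1) by simp
qed

lemma ideal_sum_mem:
  assumes "is_ideal R I" "\<And>i. i \<in> A \<Longrightarrow> f i \<in> I"
  shows "sum f A \<in> I"
  using assms by (intro sum_mem_closed) (auto simp: is_ideal_def)

lemma sum_support_eq:
  assumes "finite F" "{\<alpha>. f \<alpha> \<noteq> 0} \<subseteq> F"
  shows "sum f {\<alpha>. f \<alpha> \<noteq> 0} = sum f F"
  by (rule sum.mono_neutral_left) (use assms in auto)

lemma integrally_closed_monic_quadratic:
  assumes "integrally_closed R" "b \<in> R" "c \<in> R" "x * x + b * x + c = 0"
  shows "x \<in> R"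
proof -
  define coeff where "coeff i = (if i = 0 then c else b)" for i :: nat
  have "x ^ 2 + (\<Sum>i<2. coeff i * x ^ i) = 0"
    using assms(4) by (simp add: coeff_def numeral_2_eq_2 power2_eq_square algebra_simps)
  moreover have "\<forall>i<2. coeff i \<in> R" using assms(2,3) by (simp add: coeff_def)
  ultimately have "\<exists>n::nat. \<exists>c. n > 0 \<and> (\<forall>i<n. c i \<in> R) \<and> x ^ n + (\<Sum>i<n. c i * x ^ i) = 0"
    by (intro exI[of _ 2] exI[of _ coeff]) simp
  then show ?thesis using assms(1) unfolding integrally_closed_def by blast
qed

lemma sum_mem_ideal_product:
  assumes "finite T" "\<And>t. t \<in> T \<Longrightarrow> a t \<in> A" "\<And>t. t \<in> T \<Longrightarrow> b t \<in> B"
  shows "(\<Sum>t\<in>T. a t * b t) \<in> ideal_product A B"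
proof -
  obtain h where h: "bij_betw h {..<card T} T"
    using ex_bij_betw_nat_finite[OF assms(1)] by (auto simp: atLeast0LessThan)
  then have "(\<Sum>t\<in>T. a t * b t) = (\<Sum>i<card T. a (h i) * b (h i))"
    using sum.reindex_bij_betw[OF h, of "\<lambda>t. a t * b t"] by simp
  moreover have "\<forall>i<card T. a (h i) \<in> A \<and> b (h i) \<in> B"
    using h assms(2,3) by (auto simp: bij_betw_def)
  ultimately show ?thesis unfolding ideal_product_def
    by (intro CollectI exI[of _ "card T"] exI[of _ "a \<circ> h"] exI[of _ "b \<circ> h"]) simp
qed

locale field_subring =
  fixes R :: "'k::field set"
  assumes zero_mem [simp]: "0 \<in> R" and one_mem [simp]: "1 \<in> R"
    and add_mem: "x \<in> R \<Longrightarrow> y \<in> R \<Longrightarrow> x + y \<in> R"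
    and mult_mem: "x \<in> R \<Longrightarrow> y \<in> R \<Longrightarrow> x * y \<in> R"
    and uminus_mem: "x \<in> R \<Longrightarrow> - x \<in> R"
begin

lemma diff_mem: "x \<in> R \<Longrightarrow> y \<in> R \<Longrightarrow> x - y \<in> R"
  by (metis add_mem uminus_mem diff_conv_add_uminus)

lemma sum_mem: "(\<And>i. i \<in> A \<Longrightarrow> f i \<in> R) \<Longrightarrow> sum f A \<in> R"
  by (rule sum_mem_closed) (auto intro: add_mem)

lemma ideal_gen_is_ideal:
  assumes "S \<subseteq> R"
  shows "is_ideal R (ideal_gen R S)"
  unfolding is_ideal_def
proof (intro conjI ballI subsetI)
  fix x assume "x \<in> ideal_gen R S"
  then obtain T c where "x = (\<Sum>s\<in>T. c s * s)" "T \<subseteq> S" "\<forall>s\<in>T. c s \<in> R"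
    unfolding ideal_gen_def by blast
  then show "x \<in> R" using assms by (auto intro!: sum_mem mult_mem)
next
  show "0 \<in> ideal_gen R S" unfolding ideal_gen_def
    by (intro CollectI exI[of _ "{}"]) auto
next
  fix x y assume "x \<in> ideal_gen R S" "y \<in> ideal_gen R S"
  then obtain T1 c1 T2 c2
    where x: "x = (\<Sum>s\<in>T1. c1 s * s)" "finite T1" "T1 \<subseteq> S" "\<forall>s\<in>T1. c1 s \<in> R"
      and y: "y = (\<Sum>s\<in>T2. c2 s * s)" "finite T2" "T2 \<subseteq> S" "\<forall>s\<in>T2. c2 s \<in> R"
    unfolding ideal_gen_def by blast
  define c where "c s = (if s \<in> T1 then c1 s else 0) + (if s \<in> T2 then c2 s else 0)" for s
  have fin: "finite (T1 \<union> T2)" using x y by auto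
  have "(\<Sum>s\<in>T1 \<union> T2. c s * s) = (\<Sum>s\<in>T1 \<union> T2. if s \<in> T1 then c1 s * s else 0)
     + (\<Sum>s\<in>T1 \<union> T2. if s \<in> T2 then c2 s * s else 0)"
    unfolding c_def distrib_right sum.distrib by (intro arg_cong2[where f="(+)"] sum.cong) auto
  also have "\<dots> = x + y"
    using sum.inter_restrict[OF fin, of "\<lambda>s. c1 s * s" T1]
      sum.inter_restrict[OF fin, of "\<lambda>s. c2 s * s" T2] x y
    by (simp add: Int_absorb1)
  finally have "x + y = (\<Sum>s\<in>T1 \<union> T2. c s * s)" by simp
  moreover have "\<forall>s\<in>T1 \<union> T2. c s \<in> R" using x y by (auto simp: c_def intro: add_mem)
  ultimately show "x + y \<in> ideal_gen R S" unfolding ideal_gen_def using fin x(3) y(3)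
    by (intro CollectI exI[of _ "T1 \<union> T2"] exI[of _ c]) simp
next
  fix r x assume r: "r \<in> R" and "x \<in> ideal_gen R S"
  then obtain T c where x: "x = (\<Sum>s\<in>T. c s * s)" "finite T" "T \<subseteq> S" "\<forall>s\<in>T. c s \<in> R"
    unfolding ideal_gen_def by blast
  have "r * x = (\<Sum>s\<in>T. (r * c s) * s)" unfolding x by (simp add: sum_distrib_left mult.assoc)
  moreover have "\<forall>s\<in>T. r * c s \<in> R" using x r by (auto intro: mult_mem)
  ultimately show "r * x \<in> ideal_gen R S" unfolding ideal_gen_def using x(2,3)
    by (intro CollectI exI[of _ T] exI[of _ "\<lambda>s. r * c s"]) simp
qed

lemma generators_subset_ideal_gen: "S \<subseteq> ideal_gen R S"
proof
  fix s assume "s \<in> S"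
  then show "s \<in> ideal_gen R S" unfolding ideal_gen_def
    by (intro CollectI exI[of _ "{s}"] exI[of _ "\<lambda>_. 1"]) auto
qed

lemma ideal_gen_least:
  assumes "is_ideal R I" "S \<subseteq> I"
  shows "ideal_gen R S \<subseteq> I"
proof
  fix x assume "x \<in> ideal_gen R S"
  then obtain T c where "x = (\<Sum>s\<in>T. c s * s)" "T \<subseteq> S" "\<forall>s\<in>T. c s \<in> R"
    unfolding ideal_gen_def by blast
  with assms show "x \<in> I" by (auto simp: is_ideal_def intro!: ideal_sum_mem)
qed

lemma sum_mem_ideal_gen:
  assumes "S \<subseteq> R" "\<And>i. i \<in> A \<Longrightarrow> f i \<in> S"
  shows "sum f A \<in> ideal_gen R S"
  using assms generators_subset_ideal_gen by (intro ideal_sum_mem[OF ideal_gen_is_ideal]) auto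

lemma ideal_gen_empty: "ideal_gen R {} = {0}"
  unfolding ideal_gen_def by auto

lemma ideal_gen_pair_mem:
  assumes "x \<in> ideal_gen R {u, v}"
  obtains r s where "r \<in> R" "s \<in> R" "x = r * u + s * v"
proof -
  obtain T c where x: "x = (\<Sum>t\<in>T. c t * t)" "T \<subseteq> {u, v}" "\<forall>t\<in>T. c t \<in> R"
    using assms unfolding ideal_gen_def by blast
  define c' where "c' t = (if t \<in> T then c t else 0)" for t
  have c'_mem: "c' t \<in> R" for t using x(3) by (simp add: c'_def)
  have "x = (\<Sum>t\<in>{u, v}. c' t * t)"
    unfolding x(1) c'_def by (rule sum.mono_neutral_cong_left) (use x(2) in auto)
  then show ?thesis
    by (cases "u = v") (auto intro: that[OF c'_mem c'_mem] that[OF c'_mem zero_mem])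
qed

lemma mem_colon_ideal_genI:
  assumes "\<And>s. s \<in> S \<Longrightarrow> y * s \<in> R"
  shows "y \<in> colon R (ideal_gen R S)"
  unfolding colon_def
proof (intro CollectI ballI)
  fix e assume "e \<in> ideal_gen R S"
  then obtain T c where e: "e = (\<Sum>s\<in>T. c s * s)" "T \<subseteq> S" "\<forall>s\<in>T. c s \<in> R"
    unfolding ideal_gen_def by blast
  have "y * e = (\<Sum>s\<in>T. c s * (y * s))" unfolding e by (simp add: sum_distrib_left mult_ac)
  also have "\<dots> \<in> R" using e assms by (intro sum_mem) (blast intro: mult_mem)
  finally show "y * e \<in> R" .
qed

lemma ideal_product_colon_subset: "ideal_product I (colon R I) \<subseteq> R"
proof
  fix x assume "x \<in> ideal_product I (colon R I)"
  then obtain n :: nat and a b where "x = (\<Sum>i<n. a i * b i)" "\<forall>i<n. a i \<in> I \<and> b i \<in> colon R I"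
    unfolding ideal_product_def by blast
  then show "x \<in> R" by (auto simp: colon_def mult.commute intro!: sum_mem)
qed

lemma v_ideal_if_invertible:
  assumes I: "is_ideal R I" and inv: "invertible_ideal R I"
  shows "v_ideal R I"
  unfolding v_ideal_def
proof
  show "I \<subseteq> colon R (colon R I)" unfolding colon_def by (auto simp: mult.commute)
  show "colon R (colon R I) \<subseteq> I"
  proof
    fix x assume x: "x \<in> colon R (colon R I)"
    have "1 \<in> ideal_product I (colon R I)" using inv unfolding invertible_ideal_def by simp
    then obtain n :: nat and a b
      where one: "1 = (\<Sum>i<n. a i * b i)" and ab: "\<forall>i<n. a i \<in> I \<and> b i \<in> colon R I"
      unfolding ideal_product_def by blast
    have "x = x * (\<Sum>i<n. a i * b i)" using one by simp
    also have "\<dots> = (\<Sum>i<n. (x * b i) * a i)" by (simp add: sum_distrib_left mult_ac)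
    also have "\<dots> \<in> I"
      using ab x I by (intro ideal_sum_mem[OF I]) (auto simp: colon_def is_ideal_def)
    finally show "x \<in> I" .
  qed
qed

definition rdvd :: "'k \<Rightarrow> 'k \<Rightarrow> bool" where
  "rdvd a x \<longleftrightarrow> (\<exists>r\<in>R. x = a * r)"

lemma rdvd_refl: "rdvd a a"
  unfolding rdvd_def by (intro bexI[of _ 1]) simp_all

lemma rdvd_mult:
  assumes "rdvd a x" "y \<in> R"
  shows "rdvd a (y * x)"
proof -
  obtain r where "r \<in> R" "x = a * r" using assms(1) unfolding rdvd_def by blast
  then have "y * r \<in> R" "y * x = a * (y * r)" using assms(2) by (simp_all add: mult_mem mult_ac)
  then show ?thesis unfolding rdvd_def by blast
qed

lemma rdvd_mult_rdvd:
  assumes "rdvd c (u * a)" "rdvd a x"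
  shows "rdvd c (u * x)"
proof -
  obtain r where "r \<in> R" "u * a = c * r" using assms(1) unfolding rdvd_def by blast
  moreover obtain t where "t \<in> R" "x = a * t" using assms(2) unfolding rdvd_def by blast
  ultimately have "r * t \<in> R" "u * x = c * (r * t)" by (simp_all add: mult_mem mult.assoc[symmetric])
  then show ?thesis unfolding rdvd_def by blast
qed

lemma rdvd_sum:
  assumes "\<And>i. i \<in> A \<Longrightarrow> rdvd a (f i)"
  shows "rdvd a (sum f A)"
proof -
  have "\<forall>i\<in>A. \<exists>r\<in>R. f i = a * r" using assms unfolding rdvd_def by blast
  then obtain r where r: "\<And>i. i \<in> A \<Longrightarrow> r i \<in> R \<and> f i = a * r i"
    by metis
  then have "sum f A = a * sum r A" by (simp add: sum_distrib_left)
  with r show ?thesis unfolding rdvd_def by (blast intro: sum_mem)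
qed

text \<open>After inverting p the ideal (a, b) is generated by b, after inverting 1 - p by a.\<close>
definition locally_principal_pair :: "'k \<Rightarrow> 'k \<Rightarrow> bool" where
  "locally_principal_pair a b \<longleftrightarrow> (\<exists>p\<in>R. rdvd b (p * a) \<and> rdvd a ((1 - p) * b))"

definition principal_partition :: "'k set \<Rightarrow> ('k \<Rightarrow> 'k) \<Rightarrow> bool" where
  "principal_partition S p \<longleftrightarrow>
     (\<forall>i\<in>S. p i \<in> R) \<and> sum p S = 1 \<and> (\<forall>i\<in>S. \<forall>k\<in>S. rdvd i (p i * k))"

lemma invertible_if_principal_partition:
  assumes nz: "0 \<notin> S" and p: "principal_partition S p"
  shows "invertible_ideal R (ideal_gen R S)"
  unfolding invertible_ideal_def
proof (rule equalityI[OF ideal_product_colon_subset subsetI])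
  fix r assume r: "r \<in> R"
  have sum_p: "sum p S = 1" using p unfolding principal_partition_def by blast
  then have fin: "finite S" by (metis sum.infinite zero_neq_one)
  define q where "q i = r * p i / i" for i
  have r_eq: "r = (\<Sum>i\<in>S. i * q i)"
  proof -
    have "r = r * sum p S" using sum_p by simp
    also have "\<dots> = (\<Sum>i\<in>S. i * q i)"
      unfolding q_def sum_distrib_left by (rule sum.cong) (use nz in auto)
    finally show ?thesis .
  qed
  have "q i \<in> colon R (ideal_gen R S)" if i: "i \<in> S" for i
  proof (rule mem_colon_ideal_genI)
    fix k assume "k \<in> S"
    then obtain t where t: "t \<in> R" "p i * k = i * t"
      using p i unfolding principal_partition_def rdvd_def by blast
    have "q i * k = r * (p i * k) / i" unfolding q_def by simp
    also have "\<dots> = r * t" using t(2) nz i by (metis nonzero_mult_div_cancel_left mult.left_commute)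
    finally show "q i * k \<in> R" using r t(1) by (simp add: mult_mem)
  qed
  then have "(\<Sum>i\<in>S. i * q i) \<in> ideal_product (ideal_gen R S) (colon R (ideal_gen R S))"
    using generators_subset_ideal_gen by (intro sum_mem_ideal_product[OF fin]) auto
  then show "r \<in> ideal_product (ideal_gen R S) (colon R (ideal_gen R S))"
    using r_eq by simp
qed

lemma principal_partition_insert:
  assumes "c \<notin> S" and "principal_partition S p"
    and q: "\<And>i. i \<in> S \<Longrightarrow> q i \<in> R \<and> rdvd i (q i * c) \<and> rdvd c ((1 - q i) * i)"
  shows "principal_partition (insert c S)
    (\<lambda>j. if j = c then \<Sum>i\<in>S. p i * (1 - q i) else p j * q j)" (is "principal_partition _ ?p'")
proof -
  have p: "\<forall>i\<in>S. p i \<in> R" "sum p S = 1" "\<forall>i\<in>S. \<forall>k\<in>S. rdvd i (p i * k)"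
    using assms(2) unfolding principal_partition_def by blast+
  have p'_c: "?p' c = (\<Sum>i\<in>S. p i * (1 - q i))" and p'_S: "\<And>i. i \<in> S \<Longrightarrow> ?p' i = p i * q i"
    using \<open>c \<notin> S\<close> by auto
  have "\<forall>i\<in>insert c S. ?p' i \<in> R"
    using p(1) q by (auto simp: p'_S intro!: sum_mem mult_mem diff_mem)
  moreover have "sum ?p' (insert c S) = 1"
  proof -
    have "finite S" using p(2) by (metis sum.infinite zero_neq_one)
    then have "sum ?p' (insert c S) = ?p' c + sum ?p' S" using \<open>c \<notin> S\<close> by (rule sum.insert)
    also have "\<dots> = (\<Sum>i\<in>S. p i * (1 - q i)) + (\<Sum>i\<in>S. p i * q i)"
      unfolding p'_c using sum.cong[OF refl p'_S] by simp
    also have "\<dots> = sum p S" by (simp add: sum.distrib[symmetric] algebra_simps)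
    finally show ?thesis using p(2) by simp
  qed
  moreover have "rdvd i (?p' i * k)" if i: "i \<in> insert c S" and k: "k \<in> insert c S" for i k
  proof (cases "i = c")
    case True
    have "rdvd c (p j * (1 - q j) * k)" if j: "j \<in> S" for j
    proof (cases "k = c")
      case True
      have "p j * (1 - q j) \<in> R" using p(1) q j by (auto intro!: mult_mem diff_mem)
      then show ?thesis using True rdvd_mult[OF rdvd_refl] by blast
    next
      case False
      then have "rdvd j (p j * k)" using p(3) j k by blast
      then have "rdvd c ((1 - q j) * (p j * k))" using q[OF j] rdvd_mult_rdvd by blast
      then show ?thesis by (simp add: mult_ac)
    qed
    then have "rdvd c (\<Sum>j\<in>S. p j * (1 - q j) * k)" by (rule rdvd_sum)
    then show ?thesis using True by (simp add: sum_distrib_right)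
  next
    case False
    then have iS: "i \<in> S" using i by blast
    have "rdvd i (p i * (q i * c))" using rdvd_mult p(1) q iS by blast
    moreover have "rdvd i (q i * (p i * k))" if "k \<in> S" using rdvd_mult p(3) q iS that by blast
    ultimately show ?thesis using k by (auto simp: p'_S[OF iS] mult_ac)
  qed
  ultimately show ?thesis unfolding principal_partition_def by blast
qed

lemma principal_partition_exists:
  assumes "finite S" "S \<noteq> {}" "\<And>a b. a \<in> S \<Longrightarrow> b \<in> S \<Longrightarrow> locally_principal_pair a b"
  shows "\<exists>p. principal_partition S p"
  using assms
proof (induction S rule: finite_ne_induct)
  case (singleton c)
  have "principal_partition {c} (\<lambda>_. 1)"
    unfolding principal_partition_def using rdvd_refl by simp
  then show ?case by blast
next
  case (insert c S)
  then obtain p where "principal_partition S p" by blast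
  moreover have "\<forall>i\<in>S. \<exists>q\<in>R. rdvd i (q * c) \<and> rdvd c ((1 - q) * i)"
    using insert.prems unfolding locally_principal_pair_def by blast
  then obtain q where "\<And>i. i \<in> S \<Longrightarrow> q i \<in> R \<and> rdvd i (q i * c) \<and> rdvd c ((1 - q i) * i)"
    by metis
  ultimately show ?case using principal_partition_insert[OF \<open>c \<notin> S\<close>] by blast
qed

lemma mult_mem_divisorial_closure_of_squares:
  assumes ic: "integrally_closed R"
  shows "a * b \<in> colon R (colon R (ideal_gen R {a * a, b * b}))"
  unfolding colon_def[of R "colon R _"]
proof (intro CollectI ballI)
  fix y assume y: "y \<in> colon R (ideal_gen R {a * a, b * b})"
  have "y * (a * a) \<in> R" "y * (b * b) \<in> R"
    using y generators_subset_ideal_gen unfolding colon_def by blast+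
  then have "- ((y * (a * a)) * (y * (b * b))) \<in> R" by (simp add: uminus_mem mult_mem)
  moreover have "(a * b * y) * (a * b * y) + 0 * (a * b * y) + - ((y * (a * a)) * (y * (b * b))) = 0"
    by (simp add: algebra_simps)
  ultimately show "a * b * y \<in> R"
    by (rule integrally_closed_monic_quadratic[OF ic zero_mem])
qed

lemma locally_principal_pair_if_mem_squares:
  assumes ic: "integrally_closed R" and "b \<noteq> 0" "r \<in> R" "s \<in> R"
    and ab: "a * b = r * (a * a) + s * (b * b)"
  shows "locally_principal_pair a b"
proof -
  define x where "x = r * a / b"
  have "- 1 \<in> R" "r * s \<in> R" using assms(3,4) by (simp_all add: uminus_mem mult_mem)
  moreover have "x * x + (- 1) * x + r * s = 0"
  proof -
    have "x * x + (- 1) * x + r * s = (r * (r * (a * a) + s * (b * b)) - r * (a * b)) / (b * b)"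
      unfolding x_def using \<open>b \<noteq> 0\<close> by (simp add: field_simps)
    then show ?thesis using ab by simp
  qed
  ultimately have "x \<in> R" by (rule integrally_closed_monic_quadratic[OF ic])
  then have "1 - x \<in> R" by (simp add: diff_mem)
  moreover have "(1 - x) * a = b * s"
  proof -
    have "(1 - x) * a * b = a * b - r * (a * a)"
      unfolding x_def using \<open>b \<noteq> 0\<close> by (simp add: field_simps)
    also have "\<dots> = b * s * b" using ab by (simp add: algebra_simps)
    finally show ?thesis using \<open>b \<noteq> 0\<close> by simp
  qed
  moreover have "(1 - (1 - x)) * b = a * r" unfolding x_def using \<open>b \<noteq> 0\<close> by simp
  ultimately show ?thesis
    unfolding locally_principal_pair_def rdvd_def using assms(3,4) by blast
qed

lemma locally_principal_pair_if_v_ideal: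
  assumes "integrally_closed R" "b \<noteq> 0" "v_ideal R (ideal_gen R {a * a, b * b})"
  shows "locally_principal_pair a b"
proof -
  have "a * b \<in> ideal_gen R {a * a, b * b}"
    using mult_mem_divisorial_closure_of_squares[OF assms(1)] assms(3) unfolding v_ideal_def by blast
  then obtain r s where "r \<in> R" "s \<in> R" "a * b = r * (a * a) + s * (b * b)"
    by (rule ideal_gen_pair_mem)
  with assms(1,2) show ?thesis by (rule locally_principal_pair_if_mem_squares)
qed

end

lemma field_subring_if_graded_domain: "graded_domain \<Gamma> R Rg \<Longrightarrow> field_subring R"
  unfolding graded_domain_def field_subring_def by blast

lemma
  assumes "graded_domain \<Gamma> R Rg"
  shows graded_domain_add_closed: "\<alpha> \<in> \<Gamma> \<Longrightarrow> \<beta> \<in> \<Gamma> \<Longrightarrow> \<alpha> + \<beta> \<in> \<Gamma>"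
    and graded_component_subset: "\<alpha> \<in> \<Gamma> \<Longrightarrow> Rg \<alpha> \<subseteq> R"
    and graded_component_zero: "\<alpha> \<in> \<Gamma> \<Longrightarrow> 0 \<in> Rg \<alpha>"
    and graded_component_mult:
      "\<alpha> \<in> \<Gamma> \<Longrightarrow> \<beta> \<in> \<Gamma> \<Longrightarrow> x \<in> Rg \<alpha> \<Longrightarrow> y \<in> Rg \<beta> \<Longrightarrow> x * y \<in> Rg (\<alpha> + \<beta>)"
    and graded_decomposition: "r \<in> R \<Longrightarrow> \<exists>f. hom_family \<Gamma> Rg f \<and> r = sum f {\<alpha>. f \<alpha> \<noteq> 0}"
  using assms unfolding graded_domain_def by blast+

lemma graded_component_add:
  assumes "graded_domain \<Gamma> R Rg" "\<alpha> \<in> \<Gamma>" "x \<in> Rg \<alpha>" "y \<in> Rg \<alpha>"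
  shows "x + y \<in> Rg \<alpha>"
proof -
  have diff: "\<forall>x\<in>Rg \<alpha>. \<forall>y\<in>Rg \<alpha>. x - y \<in> Rg \<alpha>" using assms(1,2) unfolding graded_domain_def by blast
  then have "0 - y \<in> Rg \<alpha>" using graded_component_zero[OF assms(1,2)] assms(4) by blast
  then have "x - (0 - y) \<in> Rg \<alpha>" using diff assms(3) by blast
  then show ?thesis by simp
qed

definition homogeneous_sums :: "'g set \<Rightarrow> ('g \<Rightarrow> 'k::field set) \<Rightarrow> 'k set" where
  "homogeneous_sums \<Gamma> D = {x. \<exists>f. hom_family \<Gamma> D f \<and> x = sum f {\<alpha>. f \<alpha> \<noteq> 0}}"

lemma homogeneous_ideal_iff:
  "homogeneous_ideal \<Gamma> R Rg I \<longleftrightarrow> is_ideal R I \<and> I \<subseteq> homogeneous_sums \<Gamma> (\<lambda>\<alpha>. Rg \<alpha> \<inter> I)"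
  unfolding homogeneous_ideal_def homogeneous_sums_def by blast

lemma zero_mem_homogeneous_sums:
  assumes "\<And>\<alpha>. \<alpha> \<in> \<Gamma> \<Longrightarrow> 0 \<in> D \<alpha>"
  shows "0 \<in> homogeneous_sums \<Gamma> D"
  unfolding homogeneous_sums_def hom_family_def using assms
  by (intro CollectI exI[of _ "\<lambda>_. 0"]) simp

lemma add_mem_homogeneous_sums:
  assumes add: "\<And>\<alpha> x y. \<alpha> \<in> \<Gamma> \<Longrightarrow> x \<in> D \<alpha> \<Longrightarrow> y \<in> D \<alpha> \<Longrightarrow> x + y \<in> D \<alpha>"
    and "x \<in> homogeneous_sums \<Gamma> D" "y \<in> homogeneous_sums \<Gamma> D"
  shows "x + y \<in> homogeneous_sums \<Gamma> D"
proof -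
  obtain f g where f: "hom_family \<Gamma> D f" "x = sum f {\<alpha>. f \<alpha> \<noteq> 0}"
    and g: "hom_family \<Gamma> D g" "y = sum g {\<alpha>. g \<alpha> \<noteq> 0}"
    using assms(2,3) unfolding homogeneous_sums_def by blast
  define U where "U = {\<alpha>. f \<alpha> \<noteq> 0} \<union> {\<alpha>. g \<alpha> \<noteq> 0}"
  have U: "finite U" "U \<subseteq> \<Gamma>" using f(1) g(1) unfolding U_def hom_family_def by auto
  have supp: "{\<alpha>. f \<alpha> + g \<alpha> \<noteq> 0} \<subseteq> U" unfolding U_def by auto
  have "hom_family \<Gamma> D (\<lambda>\<alpha>. f \<alpha> + g \<alpha>)"
    unfolding hom_family_def using f(1) g(1) U supp add
    by (auto simp: hom_family_def intro: finite_subset)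
  moreover have "x + y = sum (\<lambda>\<alpha>. f \<alpha> + g \<alpha>) {\<alpha>. f \<alpha> + g \<alpha> \<noteq> 0}"
    unfolding f(2) g(2) sum_support_eq[OF U(1) supp]
    by (simp add: sum.distrib U_def sum_support_eq[OF U(1)])
  ultimately show ?thesis unfolding homogeneous_sums_def by blast
qed

lemma mult_mem_homogeneous_sums:
  assumes gd: "graded_domain \<Gamma> R Rg" and J: "is_ideal R J"
    and s: "\<beta> \<in> \<Gamma>" "s \<in> Rg \<beta>" "s \<in> J" and r: "r \<in> R"
  shows "r * s \<in> homogeneous_sums \<Gamma> (\<lambda>\<alpha>. Rg \<alpha> \<inter> J)"
proof -
  obtain f where f: "hom_family \<Gamma> Rg f" "r = sum f {\<alpha>. f \<alpha> \<noteq> 0}"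
    using graded_decomposition[OF gd r] by blast
  define F where "F = {\<alpha>. f \<alpha> \<noteq> 0}"
  have F: "finite F" "F \<subseteq> \<Gamma>" using f(1) unfolding F_def hom_family_def by auto
  define g where "g \<delta> = f (\<delta> - \<beta>) * s" for \<delta>
  have supp: "{\<delta>. g \<delta> \<noteq> 0} \<subseteq> (\<lambda>\<gamma>. \<gamma> + \<beta>) ` F"
    unfolding g_def F_def by (auto intro: image_eqI[of _ _ "_ - \<beta>"])
  have "g \<delta> \<in> Rg \<delta> \<inter> J" if \<delta>: "\<delta> \<in> \<Gamma>" for \<delta>
  proof (cases "\<delta> - \<beta> \<in> F")
    case True
    then have "\<delta> - \<beta> \<in> \<Gamma>" "f (\<delta> - \<beta>) \<in> Rg (\<delta> - \<beta>)" using F(2) f(1) unfolding hom_family_def by auto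
    then have "f (\<delta> - \<beta>) * s \<in> Rg \<delta>" "f (\<delta> - \<beta>) \<in> R"
      using graded_component_mult[OF gd _ s(1) _ s(2), of "\<delta> - \<beta>"] graded_component_subset[OF gd]
      by auto
    then show ?thesis using J s(3) unfolding g_def is_ideal_def by simp
  next
    case False
    then show ?thesis using graded_component_zero[OF gd \<delta>] J unfolding g_def F_def is_ideal_def by simp
  qed
  moreover have "{\<delta>. g \<delta> \<noteq> 0} \<subseteq> \<Gamma>"
    using supp F(2) graded_domain_add_closed[OF gd _ s(1)] by blast
  moreover have "finite {\<delta>. g \<delta> \<noteq> 0}" using supp F(1) finite_subset by blast
  moreover have "r * s = sum g {\<delta>. g \<delta> \<noteq> 0}"
  proof -
    have "sum g {\<delta>. g \<delta> \<noteq> 0} = sum g ((\<lambda>\<gamma>. \<gamma> + \<beta>) ` F)"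
      using sum_support_eq[OF _ supp] F(1) by simp
    also have "\<dots> = (\<Sum>\<gamma>\<in>F. f \<gamma> * s)" by (simp add: sum.reindex g_def)
    also have "\<dots> = r * s" unfolding f(2) F_def by (simp add: sum_distrib_right)
    finally show ?thesis by simp
  qed
  ultimately show ?thesis unfolding homogeneous_sums_def hom_family_def by blast
qed

lemma homogeneous_ideal_gen:
  assumes gd: "graded_domain \<Gamma> R Rg" and S: "\<And>s. s \<in> S \<Longrightarrow> \<exists>\<alpha>\<in>\<Gamma>. s \<in> Rg \<alpha>"
  shows "homogeneous_ideal \<Gamma> R Rg (ideal_gen R S)"
proof -
  interpret field_subring R using gd by (rule field_subring_if_graded_domain)
  define J where "J = ideal_gen R S"
  have "S \<subseteq> R" using S graded_component_subset[OF gd] by blast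
  then have J: "is_ideal R J" unfolding J_def by (rule ideal_gen_is_ideal)
  have "x \<in> homogeneous_sums \<Gamma> (\<lambda>\<alpha>. Rg \<alpha> \<inter> J)" if "x \<in> J" for x
  proof -
    obtain T c where x: "x = (\<Sum>s\<in>T. c s * s)" "T \<subseteq> S" "\<forall>s\<in>T. c s \<in> R"
      using \<open>x \<in> J\<close> unfolding J_def ideal_gen_def by blast
    show ?thesis unfolding x(1)
    proof (rule sum_mem_closed)
      show "0 \<in> homogeneous_sums \<Gamma> (\<lambda>\<alpha>. Rg \<alpha> \<inter> J)"
        using graded_component_zero[OF gd] J by (intro zero_mem_homogeneous_sums) (simp add: is_ideal_def)
    next
      fix y z assume "y \<in> homogeneous_sums \<Gamma> (\<lambda>\<alpha>. Rg \<alpha> \<inter> J)" "z \<in> homogeneous_sums \<Gamma> (\<lambda>\<alpha>. Rg \<alpha> \<inter> J)"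
      then show "y + z \<in> homogeneous_sums \<Gamma> (\<lambda>\<alpha>. Rg \<alpha> \<inter> J)"
        using graded_component_add[OF gd] J by (intro add_mem_homogeneous_sums) (auto simp: is_ideal_def)
    next
      fix s assume "s \<in> T"
      then obtain \<beta> where "\<beta> \<in> \<Gamma>" "s \<in> Rg \<beta>" "s \<in> J" "c s \<in> R"
        using S x generators_subset_ideal_gen unfolding J_def by blast
      then show "c s * s \<in> homogeneous_sums \<Gamma> (\<lambda>\<alpha>. Rg \<alpha> \<inter> J)"
        by (intro mult_mem_homogeneous_sums[OF gd J])
    qed
  qed
  then show ?thesis using J unfolding homogeneous_ideal_iff J_def by blast
qed

lemma homogeneous_generators:
  assumes gd: "graded_domain \<Gamma> R Rg" and "homogeneous_ideal \<Gamma> R Rg I" "fin_gen_ideal R I"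
  obtains S where "finite S" "\<And>s. s \<in> S \<Longrightarrow> s \<noteq> 0 \<and> (\<exists>\<alpha>\<in>\<Gamma>. s \<in> Rg \<alpha>)" "I = ideal_gen R S"
proof -
  interpret field_subring R using gd by (rule field_subring_if_graded_domain)
  obtain S0 where S0: "finite S0" "I = ideal_gen R S0"
    using assms(3) unfolding fin_gen_ideal_def by blast
  have I: "is_ideal R I" and hom: "I \<subseteq> homogeneous_sums \<Gamma> (\<lambda>\<alpha>. Rg \<alpha> \<inter> I)"
    using assms(2) unfolding homogeneous_ideal_iff by blast+
  have "\<forall>s\<in>S0. \<exists>f. hom_family \<Gamma> (\<lambda>\<alpha>. Rg \<alpha> \<inter> I) f \<and> s = sum f {\<alpha>. f \<alpha> \<noteq> 0}"
    using hom generators_subset_ideal_gen S0(2) unfolding homogeneous_sums_def by blast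
  then obtain G where G: "\<And>s. s \<in> S0 \<Longrightarrow> hom_family \<Gamma> (\<lambda>\<alpha>. Rg \<alpha> \<inter> I) (G s)"
    and G_sum: "\<And>s. s \<in> S0 \<Longrightarrow> s = sum (G s) {\<alpha>. G s \<alpha> \<noteq> 0}"
    by metis
  define S where "S = (\<Union>s\<in>S0. G s ` {\<alpha>. G s \<alpha> \<noteq> 0})"
  have "finite S" unfolding S_def using S0(1) G unfolding hom_family_def by auto
  moreover have S_hom: "x \<noteq> 0 \<and> (\<exists>\<alpha>\<in>\<Gamma>. x \<in> Rg \<alpha>) \<and> x \<in> I" if x: "x \<in> S" for x
  proof -
    obtain s \<alpha> where s: "s \<in> S0" "G s \<alpha> \<noteq> 0" "x = G s \<alpha>" using x unfolding S_def by blast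
    then have "\<alpha> \<in> \<Gamma>" using G unfolding hom_family_def by blast
    then have "G s \<alpha> \<in> Rg \<alpha> \<inter> I" using G[OF s(1)] unfolding hom_family_def by blast
    then show ?thesis using s \<open>\<alpha> \<in> \<Gamma>\<close> by auto
  qed
  moreover have "I = ideal_gen R S"
  proof
    have SI: "S \<subseteq> I" using S_hom by blast
    then have "S \<subseteq> R" using I unfolding is_ideal_def by blast
    then have J: "is_ideal R (ideal_gen R S)" by (rule ideal_gen_is_ideal)
    have "s \<in> ideal_gen R S" if s: "s \<in> S0" for s
      using sum_mem_ideal_gen[OF \<open>S \<subseteq> R\<close>, of "{\<alpha>. G s \<alpha> \<noteq> 0}" "G s"] G_sum[OF s] s
      unfolding S_def by auto
    then show "I \<subseteq> ideal_gen R S" using ideal_gen_least[OF J] S0(2) by blast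
    show "ideal_gen R S \<subseteq> I" using ideal_gen_least[OF I SI] .
  qed
  ultimately show ?thesis using that by blast
qed

lemma locally_principal_pair_if_homogeneous:
  assumes gd: "graded_domain \<Gamma> R Rg" and ic: "integrally_closed R"
    and V: "\<forall>I. homogeneous_ideal \<Gamma> R Rg I \<and> fin_gen_ideal R I \<and> I \<noteq> {0} \<longrightarrow> v_ideal R I"
    and a: "\<alpha> \<in> \<Gamma>" "a \<in> Rg \<alpha>" and b: "\<beta> \<in> \<Gamma>" "b \<in> Rg \<beta>" "b \<noteq> 0"
  shows "field_subring.locally_principal_pair R a b"
proof -
  interpret field_subring R using gd by (rule field_subring_if_graded_domain)
  have "a * a \<in> Rg (\<alpha> + \<alpha>)" "b * b \<in> Rg (\<beta> + \<beta>)" "\<alpha> + \<alpha> \<in> \<Gamma>" "\<beta> + \<beta> \<in> \<Gamma>"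
    using a b graded_component_mult[OF gd] graded_domain_add_closed[OF gd] by auto
  then have "homogeneous_ideal \<Gamma> R Rg (ideal_gen R {a * a, b * b})"
    by (intro homogeneous_ideal_gen[OF gd]) blast
  moreover have "fin_gen_ideal R (ideal_gen R {a * a, b * b})"
    using a b graded_component_subset[OF gd] unfolding fin_gen_ideal_def
    by (intro exI[of _ "{a * a, b * b}"]) (auto intro: mult_mem)
  moreover have "ideal_gen R {a * a, b * b} \<noteq> {0}"
    using generators_subset_ideal_gen[of "{a * a, b * b}"] \<open>b \<noteq> 0\<close> by force
  ultimately have "v_ideal R (ideal_gen R {a * a, b * b})" using V by blast
  with ic \<open>b \<noteq> 0\<close> show ?thesis by (rule locally_principal_pair_if_v_ideal)
qed

theorem corollary3p4:
  fixes \<Gamma> :: "'g::ab_group_add set" and R :: "'k::field set" and Rg :: "'g \<Rightarrow> 'k set"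
  assumes "graded_domain \<Gamma> R Rg"
    and "is_quotient_field R"
    and "integrally_closed R"
  shows "graded_pruefer \<Gamma> R Rg \<longleftrightarrow>
    (\<forall>I. homogeneous_ideal \<Gamma> R Rg I \<and> fin_gen_ideal R I \<and> I \<noteq> {0} \<longrightarrow> v_ideal R I)"
proof
  have R: "field_subring R" using assms(1) by (rule field_subring_if_graded_domain)
  show "graded_pruefer \<Gamma> R Rg \<Longrightarrow>
    \<forall>I. homogeneous_ideal \<Gamma> R Rg I \<and> fin_gen_ideal R I \<and> I \<noteq> {0} \<longrightarrow> v_ideal R I"
    unfolding graded_pruefer_def homogeneous_ideal_def
    by (blast intro: field_subring.v_ideal_if_invertible[OF R])
next
  interpret field_subring R using assms(1) by (rule field_subring_if_graded_domain)
  assume V: "\<forall>I. homogeneous_ideal \<Gamma> R Rg I \<and> fin_gen_ideal R I \<and> I \<noteq> {0} \<longrightarrow> v_ideal R I"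
  show "graded_pruefer \<Gamma> R Rg" unfolding graded_pruefer_def
  proof (intro allI impI, elim conjE)
    fix I assume "homogeneous_ideal \<Gamma> R Rg I" "fin_gen_ideal R I" "I \<noteq> {0}"
    then obtain S where S: "finite S" "\<And>s. s \<in> S \<Longrightarrow> s \<noteq> 0 \<and> (\<exists>\<alpha>\<in>\<Gamma>. s \<in> Rg \<alpha>)" "I = ideal_gen R S"
      using homogeneous_generators[OF assms(1)] by blast
    have "\<exists>p. principal_partition S p"
    proof (rule principal_partition_exists[OF S(1)])
      show "S \<noteq> {}" using S(3) \<open>I \<noteq> {0}\<close> ideal_gen_empty by blast
      show "locally_principal_pair a b" if "a \<in> S" "b \<in> S" for a b
        using S(2) that locally_principal_pair_if_homogeneous[OF assms(1,3) V] by blast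
    qed
    moreover have "0 \<notin> S" using S(2) by blast
    ultimately show "invertible_ideal R I" unfolding S(3) using invertible_if_principal_partition by blast
  qed
qed

end
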